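(* Let $\mathcal{M}\subset\mathbb{R}^n$ be a locally symmetric $C^2$ submanifold and let $\sigma_*\in\Sigma^n$ be such that $\mathcal{M}\cap B(y,\rho)\subseteq\Delta(\sigma_* )$ for some $y\in\mathcal{M}$ and $\rho>0$. Then for every $\bar x\in\mathcal{M}$ and every $\delta>0$, $\mathcal{M}\cap\Delta(\sigma_* )\cap B(\bar x,\delta)\ne\emptyset$.
   Context: $\Sigma^n$ permutations of $\mathbb{N}_n$ acting by $(\sigma x)_i=x_{\sigma^{-1}(i)}$; $P(\sigma)$ orbit partition; $P(x)$ partition by equal coordinates; $\Delta(\sigma)=\{x:P(x)=P(\sigma)\}$. $\mathbb{R}^n_\ge=\{x:x_1\ge\cdots\ge x_n\}$; $B$ open ball. A set $S$ is locally symmetric if $S\cap\mathbb{R}^n_\ge\ne\emptyset$ and each $x\in S$ has $\delta>0$ with $\sigma(S\cap B(x,\delta))=S\cap B(x,\delta)$ for all $y\in S\cap B(x,\delta)$, all $\sigma$ with $\sigma y=y$. A locally symmetric $C^2$ submanifold is a connected $C^2$ submanifold without boundary which is locally symmetric. *)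

theory Defs
  imports "HOL-Analysis.Analysis"
begin

text \<open>R^n is modelled as real^'n with 'n a finite linearly ordered index type
  (isomorphic to {1..n} with its usual order).\<close>

definition perm_act :: "('n \<Rightarrow> 'n) \<Rightarrow> real^'n \<Rightarrow> real^'n" where
  "perm_act \<sigma> x = (\<chi> i. x $ (inv \<sigma> i))"

definition orbit_partition :: "('n \<Rightarrow> 'n) \<Rightarrow> 'n set set" where
  "orbit_partition \<sigma> = UNIV // {(i, j). \<exists>k. (\<sigma> ^^ k) i = j}"

definition coord_partition :: "real^'n \<Rightarrow> 'n set set" where
  "coord_partition x = UNIV // {(i, j). x $ i = x $ j}"

definition Delta :: "('n \<Rightarrow> 'n) \<Rightarrow> (real^'n) set" where
  "Delta \<sigma> = {x. coord_partition x = orbit_partition \<sigma>}"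

definition ordered_cone :: "(real^'n::{finite,linorder}) set" where
  "ordered_cone = {x. \<forall>i j. i \<le> j \<longrightarrow> x $ j \<le> x $ i}"

definition locally_symmetric :: "(real^'n::{finite,linorder}) set \<Rightarrow> bool" where
  "locally_symmetric S \<longleftrightarrow> S \<inter> ordered_cone \<noteq> {} \<and>
    (\<forall>x\<in>S. \<exists>\<delta>>0. \<forall>y\<in>S \<inter> ball x \<delta>. \<forall>\<sigma>. \<sigma> permutes UNIV \<and> perm_act \<sigma> y = y \<longrightarrow>
        perm_act \<sigma> ` (S \<inter> ball x \<delta>) = S \<inter> ball x \<delta>)"

definition C2_on :: "'a::real_normed_vector set \<Rightarrow> ('a \<Rightarrow> 'b::real_normed_vector) \<Rightarrow> bool" where
  "C2_on U f \<longleftrightarrow> (\<exists>(f' :: 'a \<Rightarrow> ('a \<Rightarrow>\<^sub>L 'b)) (f'' :: 'a \<Rightarrow> ('a \<Rightarrow>\<^sub>L ('a \<Rightarrow>\<^sub>L 'b))).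
      (\<forall>x\<in>U. (f has_derivative blinfun_apply (f' x)) (at x)) \<and>
      (\<forall>x\<in>U. (f' has_derivative blinfun_apply (f'' x)) (at x)) \<and>
      continuous_on U f'')"

definition C2_submanifold :: "(real^'n) set \<Rightarrow> bool" where
  "C2_submanifold M \<longleftrightarrow> (\<forall>x\<in>M. \<exists>U V (\<phi> :: real^'n \<Rightarrow> real^'n) \<psi> L.
      open U \<and> x \<in> U \<and> open V \<and> subspace L \<and> C2_on U \<phi> \<and> C2_on V \<psi> \<and>
      \<phi> ` U = V \<and> (\<forall>y\<in>U. \<psi> (\<phi> y) = y) \<and> (\<forall>z\<in>V. \<phi> (\<psi> z) = z) \<and>
      \<phi> ` (M \<inter> U) = V \<inter> L)"

definition locally_symmetric_C2_submanifold :: "(real^'n::{finite,linorder}) set \<Rightarrow> bool" where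
  "locally_symmetric_C2_submanifold M \<longleftrightarrow>
     connected M \<and> C2_submanifold M \<and> locally_symmetric M"

end

theory Submission
  imports Defs
begin

text \<open>For a set E of index pairs, the points of M near which M satisfies x_i = x_j for all
  (i, j) in E form an open subset of M, and this subset is also closed in M. Indeed, at a limit
  point x0 of it, a transposition (i j) with (i, j) in E fixes x0, so by local symmetry it maps M
  near x0 into M. For a in M near x0 the vector a - (i j) a is orthogonal to every vector with
  equal i-th and j-th entries; but through a chart it is approximated by a tangent vector of M at
  a nearby point around which M satisfies x_i = x_j, and such tangent vectors have equal i-th and
  j-th entries. Hence a - (i j) a = 0. By connectedness, relations x_i = x_j holding on an open
  piece of M hold on all of M; in particular x_(\<sigma>* l) = x_l on M. If some ball around a point
  of M missed M \<inter> \<Delta>(\<sigma>*), each point of M in it would satisfy an extra relation x_i = x_j with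
  y_i \<noteq> y_j. Finitely many such closed conditions cover this piece of M, so one of them holds on
  an open piece, hence on all of M, contradicting y.\<close>

definition equal_coords :: "('n \<times> 'n) set \<Rightarrow> (real^'n) set" where
  "equal_coords E = {x. \<forall>(i, j)\<in>E. x $ i = x $ j}"

lemma closed_equal_coords: "closed (equal_coords E)"
proof -
  have "equal_coords E = (\<Inter>(i, j)\<in>E. {x. x $ i = x $ j})"
    unfolding equal_coords_def by auto
  moreover have "closed {x::real^'n. x $ i = x $ j}" for i j
    by (intro closed_Collect_eq continuous_intros)
  ultimately show ?thesis by (auto intro!: closed_INT)
qed

lemma dist_perm_act:
  assumes "\<sigma> permutes UNIV"
  shows "dist (perm_act \<sigma> a) (perm_act \<sigma> b) = dist a b"
proof -
  have "inv \<sigma> permutes UNIV" using assms by (rule permutes_inv)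
  then have "(\<Sum>i\<in>UNIV. (dist (a $ inv \<sigma> i) (b $ inv \<sigma> i))\<^sup>2) = (\<Sum>i\<in>UNIV. (dist (a $ i) (b $ i))\<^sup>2)"
    using sum.permute[of "inv \<sigma>" UNIV "\<lambda>i. (dist (a $ i) (b $ i))\<^sup>2"] by (simp add: comp_def)
  then show ?thesis by (simp add: dist_vec_def L2_set_def perm_act_def)
qed

lemma perm_act_transpose_fixed: "x $ i = x $ j \<Longrightarrow> perm_act (Transposition.transpose i j) x = x"
  by (auto simp: vec_eq_iff perm_act_def Transposition.transpose_def)

lemma locally_symmetric_transpose_near:
  assumes "locally_symmetric M" "x0 \<in> M"
  obtains \<delta> where "\<delta> > 0"
    and "\<And>a i j. a \<in> M \<inter> ball x0 \<delta> \<Longrightarrow> x0 $ i = x0 $ j \<Longrightarrow>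
           perm_act (Transposition.transpose i j) a \<in> M \<inter> ball x0 \<delta> \<and>
           dist (perm_act (Transposition.transpose i j) a) x0 = dist a x0"
proof -
  obtain \<delta> where "\<delta> > 0" and loc_sym: "\<forall>y\<in>M \<inter> ball x0 \<delta>. \<forall>\<sigma>. \<sigma> permutes UNIV \<and> perm_act \<sigma> y = y \<longrightarrow>
      perm_act \<sigma> ` (M \<inter> ball x0 \<delta>) = M \<inter> ball x0 \<delta>"
    using assms unfolding locally_symmetric_def by blast
  have "perm_act (Transposition.transpose i j) a \<in> M \<inter> ball x0 \<delta> \<and>
          dist (perm_act (Transposition.transpose i j) a) x0 = dist a x0"
    if "a \<in> M \<inter> ball x0 \<delta>" "x0 $ i = x0 $ j" for a i j
  proof -
    let ?\<tau> = "Transposition.transpose i j"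
    have perm: "?\<tau> permutes UNIV" by (simp add: permutes_swap_id)
    have x0_fixed: "perm_act ?\<tau> x0 = x0" using that(2) by (rule perm_act_transpose_fixed)
    have "perm_act ?\<tau> ` (M \<inter> ball x0 \<delta>) = M \<inter> ball x0 \<delta>"
      using loc_sym[rule_format, of x0 ?\<tau>] perm x0_fixed \<open>x0 \<in> M\<close> \<open>\<delta> > 0\<close> by simp
    moreover have "dist (perm_act ?\<tau> a) x0 = dist a x0"
      using dist_perm_act[OF perm, of a x0] x0_fixed by simp
    ultimately show ?thesis using that(1) by blast
  qed
  with \<open>\<delta> > 0\<close> show thesis by (rule that)
qed

lemma norm_le_norm_diff_orthogonal:
  fixes d :: "'a::real_inner"
  assumes "inner d T = 0"
  shows "norm d \<le> norm (d - T)"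
proof -
  have "(norm (d - T))\<^sup>2 = (norm d)\<^sup>2 + (norm T)\<^sup>2"
    using norm_add_Pythagorean[of d "- T"] assms by (simp add: orthogonal_def)
  then have "(norm d)\<^sup>2 \<le> (norm (d - T))\<^sup>2" by simp
  then show ?thesis by (rule power2_le_imp_le) simp
qed

text \<open>For the transposition \<tau> of i and j, a - \<tau> a is supported on the coordinates i, j with
  opposite signs, hence orthogonal to T.\<close>
lemma coords_eq_of_swap_diff_near_balanced:
  assumes T: "T $ i = T $ j"
    and near: "norm (a - perm_act (Transposition.transpose i j) a - T)
                 \<le> e * norm (a - perm_act (Transposition.transpose i j) a)"
    and "e < 1"
  shows "a $ i = a $ j"
proof -
  let ?d = "a - perm_act (Transposition.transpose i j) a"
  have d: "?d = (a $ i - a $ j) *\<^sub>R (axis i 1 - axis j 1)"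
    by (auto simp: vec_eq_iff perm_act_def Transposition.transpose_def axis_def)
  have "inner ?d T = 0"
    unfolding d using T by (simp add: inner_diff_left inner_axis')
  then have "norm ?d \<le> e * norm ?d"
    using norm_le_norm_diff_orthogonal near order_trans by blast
  then have "(1 - e) * norm ?d \<le> 0"
    by (simp add: algebra_simps)
  then have "?d = 0"
    using \<open>e < 1\<close> by (simp add: mult_le_0_iff)
  then have "a $ i = perm_act (Transposition.transpose i j) a $ i"
    by simp
  then show ?thesis
    by (simp add: perm_act_def)
qed

lemma has_derivative_vanishing_on_subspace:
  fixes f :: "'a::real_normed_vector \<Rightarrow> 'b::real_normed_vector"
  assumes f: "(f has_derivative D) (at w)" and "r > 0"
    and zero: "\<And>w'. w' \<in> ball w r \<inter> L \<Longrightarrow> f w' = 0"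
    and L: "subspace L" "w \<in> L" "l \<in> L"
  shows "D l = 0"
proof -
  have "((\<lambda>t::real. w + t *\<^sub>R l) has_derivative (\<lambda>t. t *\<^sub>R l)) (at 0)"
    by (auto intro!: derivative_eq_intros)
  then have "((\<lambda>t. f (w + t *\<^sub>R l)) has_derivative (\<lambda>t. D (t *\<^sub>R l))) (at 0)"
    using has_derivative_compose[of "\<lambda>t. w + t *\<^sub>R l"] f by fastforce
  moreover have "((\<lambda>t::real. w + t *\<^sub>R l) \<longlongrightarrow> w) (at 0)"
    by (auto intro!: tendsto_eq_intros)
  then have "\<forall>\<^sub>F t in at 0. w + t *\<^sub>R l \<in> ball w r"
    using \<open>r > 0\<close> by (metis centre_in_ball open_ball topological_tendstoD)
  then have "\<forall>\<^sub>F t in at 0. f (w + t *\<^sub>R l) = 0"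
    by eventually_elim (use L zero in \<open>auto intro: subspace_add subspace_scale\<close>)
  moreover have "f w = 0"
    using zero \<open>r > 0\<close> L by simp
  ultimately have "((\<lambda>t::real. 0) has_derivative (\<lambda>t. D (t *\<^sub>R l))) (at 0)"
    by (auto intro: has_derivative_transform_eventually)
  then have "(\<lambda>t::real. D (t *\<^sub>R l)) = (\<lambda>t. 0)"
    by (rule Deriv.has_derivative_zero_unique)
  then show ?thesis
    by (metis scaleR_one)
qed

lemma has_derivative_into_equal_coords:
  fixes f :: "'a::real_normed_vector \<Rightarrow> real^'n"
  assumes "(f has_derivative D) (at w)" "r > 0"
    and "\<And>w'. w' \<in> ball w r \<inter> L \<Longrightarrow> f w' \<in> equal_coords E"
    and "subspace L" "w \<in> L" "l \<in> L"
  shows "D l \<in> equal_coords E"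
  unfolding equal_coords_def
proof (clarify)
  fix i j assume "(i, j) \<in> E"
  have "bounded_linear (\<lambda>v::real^'n. v $ i - v $ j)"
    by (intro bounded_linear_sub bounded_linear_vec_nth)
  from bounded_linear.has_derivative[OF this assms(1)]
  have "((\<lambda>w. f w $ i - f w $ j) has_derivative (\<lambda>h. D h $ i - D h $ j)) (at w)"
    by simp
  moreover have "f w' $ i - f w' $ j = 0" if "w' \<in> ball w r \<inter> L" for w'
    using assms(3)[OF that] \<open>(i, j) \<in> E\<close> by (auto simp: equal_coords_def)
  ultimately have "D l $ i - D l $ j = 0"
    using has_derivative_vanishing_on_subspace assms(2,4-6) by blast
  then show "D l $ i = D l $ j" by simp
qed

lemma uniform_linearization:
  fixes f :: "'a::real_normed_vector \<Rightarrow> 'b::real_normed_vector"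
  assumes "open V" "c \<in> V"
    and f: "\<And>z. z \<in> V \<Longrightarrow> (f has_derivative blinfun_apply (f' z)) (at z)"
    and "continuous (at c) f'" "\<eta> > 0"
  shows "\<exists>r>0. ball c r \<subseteq> V \<and> (\<forall>w\<in>ball c r. \<forall>u\<in>ball c r. \<forall>v\<in>ball c r.
           norm (f u - f v - f' w (u - v)) \<le> \<eta> * norm (u - v))"
proof -
  obtain r0 where "r0 > 0" and r0: "\<And>z. dist z c < r0 \<Longrightarrow> dist (f' z) (f' c) < \<eta> / 2"
    using assms(4,5) unfolding continuous_at_eps_delta by (metis half_gt_zero)
  obtain r1 where "r1 > 0" "ball c r1 \<subseteq> V"
    using assms(1,2) open_contains_ball by blast
  define r where "r = min r0 r1"
  have "r > 0" "ball c r \<subseteq> V"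
    using \<open>r0 > 0\<close> \<open>r1 > 0\<close> \<open>ball c r1 \<subseteq> V\<close> by (auto simp: r_def)
  have "norm (f u - f v - f' w (u - v)) \<le> norm (u - v) * \<eta>"
    if "w \<in> ball c r" "u \<in> ball c r" "v \<in> ball c r" for w u v
  proof (rule differentiable_bound_linearization[of v u "ball c r"])
    show "v + t *\<^sub>R (u - v) \<in> ball c r" if "t \<in> {0..1}" for t
      using convex_ball[of c r] \<open>u \<in> ball c r\<close> \<open>v \<in> ball c r\<close> that
      by (simp add: convex_alt algebra_simps)
    show "(f has_derivative blinfun_apply (f' z)) (at z within ball c r)" if "z \<in> ball c r" for z
      using f that \<open>ball c r \<subseteq> V\<close> by (blast intro: has_derivative_at_withinI)
    show "onorm (blinfun_apply (f' z) - blinfun_apply (f' w)) \<le> \<eta>" if "z \<in> ball c r" for z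
    proof -
      have "norm (f' z - f' w) \<le> dist (f' z) (f' c) + dist (f' w) (f' c)"
        by (metis dist_norm dist_triangle2)
      also have "\<dots> \<le> \<eta>"
      proof -
        have "dist z c < r0" "dist w c < r0"
          using that \<open>w \<in> ball c r\<close> by (auto simp: r_def dist_commute)
        then show ?thesis using r0[of z] r0[of w] by linarith
      qed
      finally show ?thesis
        by (simp add: norm_blinfun.rep_eq minus_blinfun.rep_eq fun_diff_def)
    qed
  qed (use that in simp)
  then show ?thesis
    using \<open>r > 0\<close> \<open>ball c r \<subseteq> V\<close> by (auto simp: mult.commute)
qed

lemma chart_inverse_linearization:
  fixes \<phi> :: "'a::real_normed_vector \<Rightarrow> 'b::real_normed_vector" and \<psi> :: "'b \<Rightarrow> 'a"
  assumes "open U" "x0 \<in> U" "open V" "\<phi> ` U \<subseteq> V"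
    and \<phi>: "\<And>x. x \<in> U \<Longrightarrow> (\<phi> has_derivative blinfun_apply (\<phi>' x)) (at x)" "continuous (at x0) \<phi>'"
    and \<psi>: "\<And>z. z \<in> V \<Longrightarrow> (\<psi> has_derivative blinfun_apply (\<psi>' z)) (at z)"
      "continuous (at (\<phi> x0)) \<psi>'"
    and inv: "\<And>x. x \<in> U \<Longrightarrow> \<psi> (\<phi> x) = x"
    and "e > 0"
  shows "\<exists>s>0. ball x0 s \<subseteq> U \<and> (\<forall>p\<in>ball x0 s. \<forall>a\<in>ball x0 s. \<forall>b\<in>ball x0 s.
           norm (a - b - \<psi>' (\<phi> p) (\<phi> a - \<phi> b)) \<le> e * norm (a - b))"
proof -
  define C where "C = norm (\<phi>' x0) + 1"
  have "C > 0" by (simp add: C_def add_nonneg_pos)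
  have "\<phi> x0 \<in> V" using assms(2,4) by blast
  then obtain r where "r > 0" "ball (\<phi> x0) r \<subseteq> V" and lin_\<psi>:
    "\<forall>w\<in>ball (\<phi> x0) r. \<forall>u\<in>ball (\<phi> x0) r. \<forall>v\<in>ball (\<phi> x0) r.
       norm (\<psi> u - \<psi> v - \<psi>' w (u - v)) \<le> e / C * norm (u - v)"
    using uniform_linearization[OF \<open>open V\<close> _ \<psi>, of "e / C"] \<open>e > 0\<close> \<open>C > 0\<close> by auto
  obtain s1 where "s1 > 0" "ball x0 s1 \<subseteq> U" and lin_\<phi>:
    "\<forall>a\<in>ball x0 s1. \<forall>b\<in>ball x0 s1. norm (\<phi> a - \<phi> b - \<phi>' x0 (a - b)) \<le> 1 * norm (a - b)"
    using uniform_linearization[OF \<open>open U\<close> \<open>x0 \<in> U\<close> \<phi>, of 1] by auto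
  have lip: "norm (\<phi> a - \<phi> b) \<le> C * norm (a - b)" if "a \<in> ball x0 s1" "b \<in> ball x0 s1" for a b
  proof -
    have "norm (\<phi> a - \<phi> b) \<le> norm (\<phi>' x0 (a - b)) + norm (\<phi> a - \<phi> b - \<phi>' x0 (a - b))"
      by (rule norm_triangle_sub)
    also have "\<dots> \<le> norm (\<phi>' x0) * norm (a - b) + norm (a - b)"
      using lin_\<phi> that by (intro add_mono norm_blinfun) auto
    finally show ?thesis by (simp add: C_def algebra_simps)
  qed
  have "continuous (at x0) \<phi>"
    using \<phi>(1) \<open>x0 \<in> U\<close> has_derivative_continuous by blast
  then obtain s2 where "s2 > 0" and s2: "\<And>x. dist x x0 < s2 \<Longrightarrow> dist (\<phi> x) (\<phi> x0) < r"
    using \<open>r > 0\<close> unfolding continuous_at_eps_delta by blast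
  define s where "s = min s1 s2"
  have "norm (a - b - \<psi>' (\<phi> p) (\<phi> a - \<phi> b)) \<le> e * norm (a - b)"
    if "p \<in> ball x0 s" "a \<in> ball x0 s" "b \<in> ball x0 s" for p a b
  proof -
    have "\<phi> p \<in> ball (\<phi> x0) r" "\<phi> a \<in> ball (\<phi> x0) r" "\<phi> b \<in> ball (\<phi> x0) r"
      using that s2 by (auto simp: s_def dist_commute)
    moreover have "a = \<psi> (\<phi> a)" "b = \<psi> (\<phi> b)"
      using that inv \<open>ball x0 s1 \<subseteq> U\<close> by (auto simp: s_def)
    ultimately have "norm (a - b - \<psi>' (\<phi> p) (\<phi> a - \<phi> b)) \<le> e / C * norm (\<phi> a - \<phi> b)"
      using lin_\<psi> by metis
    also have "\<dots> \<le> e / C * (C * norm (a - b))"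
      using lip that \<open>e > 0\<close> \<open>C > 0\<close> by (intro mult_left_mono) (auto simp: s_def)
    finally show ?thesis using \<open>C > 0\<close> by simp
  qed
  moreover have "s > 0" "ball x0 s \<subseteq> U"
    using \<open>s1 > 0\<close> \<open>s2 > 0\<close> \<open>ball x0 s1 \<subseteq> U\<close> by (auto simp: s_def)
  ultimately show ?thesis by blast
qed

lemma C2_submanifold_C1_chart:
  fixes M :: "(real^'n) set"
  assumes "C2_submanifold M" "x0 \<in> M"
  obtains U V L and \<phi> \<psi> :: "real^'n \<Rightarrow> real^'n" and \<phi>' \<psi>'
  where "open U" "x0 \<in> U" "open V" "subspace L" "\<phi> ` U = V" "\<phi> ` (M \<inter> U) = V \<inter> L"
    and "\<And>x. x \<in> U \<Longrightarrow> \<psi> (\<phi> x) = x"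
    and "\<And>x. x \<in> U \<Longrightarrow> (\<phi> has_derivative blinfun_apply (\<phi>' x)) (at x)" "continuous (at x0) \<phi>'"
    and "\<And>z. z \<in> V \<Longrightarrow> (\<psi> has_derivative blinfun_apply (\<psi>' z)) (at z)"
      "continuous (at (\<phi> x0)) \<psi>'"
proof -
  obtain U V L and \<phi> \<psi> :: "real^'n \<Rightarrow> real^'n" where chart: "open U" "x0 \<in> U" "open V" "subspace L"
      "C2_on U \<phi>" "C2_on V \<psi>" "\<phi> ` U = V" "\<forall>x\<in>U. \<psi> (\<phi> x) = x" "\<phi> ` (M \<inter> U) = V \<inter> L"
    using bspec[OF assms(1)[unfolded C2_submanifold_def] assms(2)]
    by (elim exE conjE) (rule that; assumption)
  obtain \<phi>' \<phi>'' where \<phi>': "\<forall>x\<in>U. (\<phi> has_derivative blinfun_apply (\<phi>' x)) (at x)"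
      and "\<forall>x\<in>U. (\<phi>' has_derivative blinfun_apply (\<phi>'' x)) (at x)"
    using \<open>C2_on U \<phi>\<close> unfolding C2_on_def by blast
  then have "continuous (at x0) \<phi>'"
    using \<open>x0 \<in> U\<close> has_derivative_continuous by blast
  obtain \<psi>' \<psi>'' where \<psi>': "\<forall>z\<in>V. (\<psi> has_derivative blinfun_apply (\<psi>' z)) (at z)"
      and "\<forall>z\<in>V. (\<psi>' has_derivative blinfun_apply (\<psi>'' z)) (at z)"
    using \<open>C2_on V \<psi>\<close> unfolding C2_on_def by blast
  moreover have "\<phi> x0 \<in> V" using chart(2,7) by blast
  ultimately have "continuous (at (\<phi> x0)) \<psi>'"
    using has_derivative_continuous by blast
  with chart \<phi>' \<psi>' \<open>continuous (at x0) \<phi>'\<close> show thesis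
    by (intro that[of U V L \<phi> \<psi> \<phi>' \<psi>']) auto
qed

lemma chart_tangent_in_equal_coords:
  assumes "open V" "subspace L" "\<phi> ` (M \<inter> U) = V \<inter> L" "\<And>x. x \<in> U \<Longrightarrow> \<psi> (\<phi> x) = x"
    and "p \<in> M \<inter> U" "\<epsilon> > 0" "M \<inter> ball p \<epsilon> \<subseteq> equal_coords E"
    and \<psi>: "(\<psi> has_derivative D) (at (\<phi> p))" and "l \<in> L"
  shows "D l \<in> equal_coords E"
proof -
  have "\<phi> p \<in> V \<inter> L" using assms(3,5) by blast
  moreover have "continuous (at (\<phi> p)) \<psi>"
    using \<psi> by (rule has_derivative_continuous)
  then obtain r1 where "r1 > 0"
    and r1: "\<And>w. dist w (\<phi> p) < r1 \<Longrightarrow> dist (\<psi> w) (\<psi> (\<phi> p)) < \<epsilon>"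
    using \<open>\<epsilon> > 0\<close> unfolding continuous_at_eps_delta by blast
  obtain r2 where "r2 > 0" "ball (\<phi> p) r2 \<subseteq> V"
    using \<open>open V\<close> \<open>\<phi> p \<in> V \<inter> L\<close> open_contains_ball by blast
  define r where "r = min r1 r2"
  have "r > 0" "ball (\<phi> p) r \<subseteq> V"
    using \<open>r1 > 0\<close> \<open>r2 > 0\<close> \<open>ball (\<phi> p) r2 \<subseteq> V\<close> by (auto simp: r_def)
  have r: "dist (\<psi> w) (\<psi> (\<phi> p)) < \<epsilon>" if "dist w (\<phi> p) < r" for w
    using r1 that by (simp add: r_def)
  have "\<psi> w \<in> equal_coords E" if "w \<in> ball (\<phi> p) r \<inter> L" for w
  proof -
    have "w \<in> \<phi> ` (M \<inter> U)" using that \<open>ball (\<phi> p) r \<subseteq> V\<close> assms(3) by blast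
    then have "\<psi> w \<in> M" using assms(4) by auto
    moreover have "dist (\<psi> w) p < \<epsilon>"
      using r[of w] that assms(4,5) by (auto simp: dist_commute)
    ultimately show ?thesis using assms(7) by (auto simp: dist_commute)
  qed
  then show ?thesis
    using has_derivative_into_equal_coords[OF \<psi> \<open>r > 0\<close>] \<open>subspace L\<close> \<open>\<phi> p \<in> V \<inter> L\<close> \<open>l \<in> L\<close>
    by blast
qed

lemma locally_symmetric_flat_at_limit_of_flat_points:
  fixes M :: "(real^'n::{finite,linorder}) set"
  assumes "C2_submanifold M" "locally_symmetric M" "x0 \<in> M"
    and lim: "x0 islimpt {x\<in>M. \<exists>\<epsilon>>0. M \<inter> ball x \<epsilon> \<subseteq> equal_coords E}"
  shows "\<exists>s>0. M \<inter> ball x0 s \<subseteq> equal_coords E"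
proof -
  obtain U V L and \<phi> \<psi> :: "real^'n::{finite,linorder} \<Rightarrow> real^'n::{finite,linorder}" and \<phi>' \<psi>'
    where "open U" "x0 \<in> U" "open V" "subspace L" "\<phi> ` U = V" and flat: "\<phi> ` (M \<inter> U) = V \<inter> L"
      and inv: "\<And>x. x \<in> U \<Longrightarrow> \<psi> (\<phi> x) = x"
      and \<phi>': "\<And>x. x \<in> U \<Longrightarrow> (\<phi> has_derivative blinfun_apply (\<phi>' x)) (at x)" "continuous (at x0) \<phi>'"
      and \<psi>': "\<And>z. z \<in> V \<Longrightarrow> (\<psi> has_derivative blinfun_apply (\<psi>' z)) (at z)"
        "continuous (at (\<phi> x0)) \<psi>'"
    by (rule C2_submanifold_C1_chart[OF assms(1,3)]) (rule that)
  obtain s0 where "s0 > 0" "ball x0 s0 \<subseteq> U" and lin: "\<forall>p\<in>ball x0 s0. \<forall>a\<in>ball x0 s0. \<forall>b\<in>ball x0 s0.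
      norm (a - b - \<psi>' (\<phi> p) (\<phi> a - \<phi> b)) \<le> 1/2 * norm (a - b)"
    using chart_inverse_linearization[OF \<open>open U\<close> \<open>x0 \<in> U\<close> \<open>open V\<close> _ \<phi>' \<psi>' inv, of "1/2"]
      \<open>\<phi> ` U = V\<close> by auto
  obtain \<delta> where "\<delta> > 0" and swap: "\<And>a i j. a \<in> M \<inter> ball x0 \<delta> \<Longrightarrow> x0 $ i = x0 $ j \<Longrightarrow>
      perm_act (Transposition.transpose i j) a \<in> M \<inter> ball x0 \<delta> \<and>
      dist (perm_act (Transposition.transpose i j) a) x0 = dist a x0"
    using locally_symmetric_transpose_near[OF assms(2,3)] by blast
  define s where "s = min s0 \<delta>"
  have "s > 0" using \<open>s0 > 0\<close> \<open>\<delta> > 0\<close> by (simp add: s_def)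
  have "{x\<in>M. \<exists>\<epsilon>>0. M \<inter> ball x \<epsilon> \<subseteq> equal_coords E} \<subseteq> equal_coords E"
    using centre_in_ball by blast
  then have "x0 \<in> equal_coords E"
    using islimpt_subset[OF lim] closed_equal_coords closed_limpt by blast
  obtain p \<epsilon> where "p \<in> M" "dist p x0 < s" "\<epsilon> > 0" "M \<inter> ball p \<epsilon> \<subseteq> equal_coords E"
    using lim \<open>s > 0\<close> unfolding islimpt_approachable by blast
  then have p: "p \<in> ball x0 s0" "p \<in> M \<inter> U"
    using \<open>ball x0 s0 \<subseteq> U\<close> by (auto simp: s_def dist_commute)
  have tangent: "\<psi>' (\<phi> p) l \<in> equal_coords E" if "l \<in> L" for l
    using chart_tangent_in_equal_coords[OF \<open>open V\<close> \<open>subspace L\<close> flat inv p(2) \<open>\<epsilon> > 0\<close>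
        \<open>M \<inter> ball p \<epsilon> \<subseteq> equal_coords E\<close> _ that] \<psi>' flat p(2) by blast
  have "a $ i = a $ j" if a: "a \<in> M \<inter> ball x0 s" and "(i, j) \<in> E" for a i j
  proof -
    let ?b = "perm_act (Transposition.transpose i j) a"
    have "x0 $ i = x0 $ j"
      using \<open>x0 \<in> equal_coords E\<close> \<open>(i, j) \<in> E\<close> by (auto simp: equal_coords_def)
    then have "?b \<in> M" "dist ?b x0 = dist a x0"
      using swap[of a] a by (auto simp: s_def)
    then have ab: "a \<in> M \<inter> ball x0 s0" "?b \<in> M \<inter> ball x0 s0"
      using a by (auto simp: s_def dist_commute)
    then have "\<phi> a \<in> \<phi> ` (M \<inter> U)" "\<phi> ?b \<in> \<phi> ` (M \<inter> U)"
      using \<open>ball x0 s0 \<subseteq> U\<close> by auto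
    then have "\<phi> a - \<phi> ?b \<in> L"
      using flat \<open>subspace L\<close> by (simp add: subspace_diff)
    then have "\<psi>' (\<phi> p) (\<phi> a - \<phi> ?b) $ i = \<psi>' (\<phi> p) (\<phi> a - \<phi> ?b) $ j"
      using tangent \<open>(i, j) \<in> E\<close> by (auto simp: equal_coords_def)
    moreover have "norm (a - ?b - \<psi>' (\<phi> p) (\<phi> a - \<phi> ?b)) \<le> 1/2 * norm (a - ?b)"
      using lin p(1) ab by blast
    ultimately show ?thesis
      by (rule coords_eq_of_swap_diff_near_balanced) simp
  qed
  then show ?thesis
    unfolding equal_coords_def using \<open>s > 0\<close> by blast
qed

lemma locally_symmetric_C2_submanifold_subset_equal_coords:
  fixes M :: "(real^'n::{finite,linorder}) set"
  assumes M: "locally_symmetric_C2_submanifold M" and "y \<in> M" "\<rho> > 0"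
    and "M \<inter> ball y \<rho> \<subseteq> equal_coords E"
  shows "M \<subseteq> equal_coords E"
proof -
  define A where "A = {x\<in>M. \<exists>\<epsilon>>0. M \<inter> ball x \<epsilon> \<subseteq> equal_coords E}"
  have "openin (top_of_set M) A"
  proof (subst openin_subopen, intro ballI)
    fix x assume "x \<in> A"
    then obtain \<epsilon> where "x \<in> M" "\<epsilon> > 0" "M \<inter> ball x \<epsilon> \<subseteq> equal_coords E"
      by (auto simp: A_def)
    have "M \<inter> ball x \<epsilon> \<subseteq> A"
    proof
      fix z assume "z \<in> M \<inter> ball x \<epsilon>"
      then obtain e where "e > 0" "ball z e \<subseteq> ball x \<epsilon>"
        using open_ball open_contains_ball by blast
      then show "z \<in> A"
        using \<open>z \<in> M \<inter> ball x \<epsilon>\<close> \<open>M \<inter> ball x \<epsilon> \<subseteq> equal_coords E\<close> by (auto simp: A_def)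
    qed
    then show "\<exists>T. openin (top_of_set M) T \<and> x \<in> T \<and> T \<subseteq> A"
      using \<open>x \<in> M\<close> \<open>\<epsilon> > 0\<close> by (intro exI[of _ "M \<inter> ball x \<epsilon>"]) (auto simp: openin_open_Int)
  qed
  moreover have "closedin (top_of_set M) A"
    unfolding closedin_limpt
  proof (intro conjI allI impI)
    show "A \<subseteq> M" by (auto simp: A_def)
    fix x assume "x islimpt A \<and> x \<in> M"
    then show "x \<in> A"
      using locally_symmetric_flat_at_limit_of_flat_points M
      by (auto simp: A_def locally_symmetric_C2_submanifold_def)
  qed
  moreover have "y \<in> A" using assms(2-4) by (auto simp: A_def)
  ultimately have "A = M"
    using M connected_clopen unfolding locally_symmetric_C2_submanifold_def by blast
  then show ?thesis
    unfolding A_def using centre_in_ball by blast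
qed

lemma Delta_coord_class_eq_orbit:
  assumes "y \<in> Delta \<sigma>"
  obtains i' where "\<And>j. y $ i = y $ j \<longleftrightarrow> (\<exists>k. (\<sigma> ^^ k) i' = j)"
proof -
  let ?R = "{(i, j). y $ i = y $ j}" and ?O = "{(i, j). \<exists>k. (\<sigma> ^^ k) i = j}"
  have "?R `` {i} \<in> UNIV // ?O"
    using assms quotientI[of i UNIV ?R]
    by (simp add: Delta_def coord_partition_def orbit_partition_def)
  then obtain i' where "?R `` {i} = ?O `` {i'}" by (auto elim: quotientE)
  then show ?thesis by (intro that) (simp add: set_eq_iff)
qed

lemma Delta_orbit_invariant:
  assumes "y \<in> Delta \<sigma>"
  shows "y $ \<sigma> l = y $ l"
proof -
  obtain i' where orbit_class: "\<And>j. y $ l = y $ j \<longleftrightarrow> (\<exists>k. (\<sigma> ^^ k) i' = j)"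
    by (rule Delta_coord_class_eq_orbit[OF assms, where i = l]) blast
  then obtain k where "(\<sigma> ^^ k) i' = l" by blast
  then have "(\<sigma> ^^ Suc k) i' = \<sigma> l" by simp
  then show ?thesis using orbit_class by metis
qed

lemma locally_symmetric_C2_submanifold_orbit_invariant:
  fixes M :: "(real^'n::{finite,linorder}) set"
  assumes "locally_symmetric_C2_submanifold M" "y \<in> M" "\<rho> > 0" "M \<inter> ball y \<rho> \<subseteq> Delta \<sigma>"
    and "z \<in> M"
  shows "z $ \<sigma> l = z $ l"
proof -
  have "Delta \<sigma> \<subseteq> equal_coords {(\<sigma> l, l) | l. True}"
    using Delta_orbit_invariant by (auto simp: equal_coords_def)
  then have "M \<inter> ball y \<rho> \<subseteq> equal_coords {(\<sigma> l, l) | l. True}"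
    using assms(4) by blast
  then have "M \<subseteq> equal_coords {(\<sigma> l, l) | l. True}"
    by (rule locally_symmetric_C2_submanifold_subset_equal_coords[OF assms(1-3)])
  then show ?thesis
    using \<open>z \<in> M\<close> by (auto simp: equal_coords_def)
qed

lemma Delta_coarsening:
  assumes "y \<in> Delta \<sigma>" "z \<notin> Delta \<sigma>" "\<And>l. z $ \<sigma> l = z $ l"
  obtains i j where "z $ i = z $ j" "y $ i \<noteq> y $ j"
proof -
  have "z $ i = z $ j" if "y $ i = y $ j" for i j
  proof -
    obtain i' where orbit_class: "\<And>j. y $ i = y $ j \<longleftrightarrow> (\<exists>k. (\<sigma> ^^ k) i' = j)"
      by (rule Delta_coord_class_eq_orbit[OF assms(1), where i = i]) blast
    have orbit: "z $ (\<sigma> ^^ k) i' = z $ i'" for k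
      by (induction k) (simp_all add: assms(3))
    from orbit_class[of i] orbit_class[of j] that
    obtain k m where "(\<sigma> ^^ k) i' = i" "(\<sigma> ^^ m) i' = j"
      by blast
    then show ?thesis using orbit by metis
  qed
  moreover have "{(i, j). z $ i = z $ j} \<noteq> {(i, j). y $ i = y $ j}"
    using assms(1,2) by (auto simp: Delta_def coord_partition_def)
  ultimately show ?thesis using that by blast
qed

lemma finite_closed_cover_contains_relative_ball:
  fixes M :: "'a::metric_space set"
  assumes "finite \<F>" "\<And>F. F \<in> \<F> \<Longrightarrow> closed F"
    and "x \<in> M" "r > 0" "M \<inter> ball x r \<subseteq> \<Union>\<F>"
  shows "\<exists>F\<in>\<F>. \<exists>y\<in>M. \<exists>r'>0. M \<inter> ball y r' \<subseteq> F"
  using assms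
proof (induction \<F> arbitrary: x r rule: finite_induct)
  case (insert F \<F>)
  show ?case
  proof (cases "M \<inter> ball x r \<subseteq> F")
    case False
    then obtain z where "z \<in> M" "z \<in> ball x r - F" by blast
    moreover have "open (ball x r - F)"
      using insert.prems(1) by (simp add: open_Diff)
    ultimately obtain r' where "r' > 0" "ball z r' \<subseteq> ball x r - F"
      using open_contains_ball by blast
    then have "M \<inter> ball z r' \<subseteq> \<Union>\<F>" using insert.prems(4) by blast
    then show ?thesis
      using insert.IH[OF _ \<open>z \<in> M\<close> \<open>r' > 0\<close>] insert.prems(1) by blast
  qed (use insert.prems in blast)
qed auto

theorem corollary3p24:
  fixes \<sigma>s :: "'n::{finite,linorder} \<Rightarrow> 'n::{finite,linorder}" and M :: "(real^'n::{finite,linorder}) set"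
    and y :: "real^'n::{finite,linorder}" and \<rho> :: real
  assumes "locally_symmetric_C2_submanifold M"
    and "\<sigma>s permutes UNIV"
    and "y \<in> M" and "\<rho> > 0"
    and "M \<inter> ball y \<rho> \<subseteq> Delta \<sigma>s"
  shows "\<forall>xb\<in>M. \<forall>\<delta>>0. M \<inter> Delta \<sigma>s \<inter> ball xb \<delta> \<noteq> {}"
proof (intro ballI allI impI notI)
  fix x \<delta> assume "x \<in> M" "(\<delta>::real) > 0" and empty: "M \<inter> Delta \<sigma>s \<inter> ball x \<delta> = {}"
  have "y \<in> Delta \<sigma>s" using assms(3-5) by auto
  define \<F> where "\<F> = (\<lambda>p. equal_coords {p}) ` {(i, j). y $ i \<noteq> y $ j}"
  have "finite \<F>" "\<And>F. F \<in> \<F> \<Longrightarrow> closed F"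
    by (auto simp: \<F>_def closed_equal_coords)
  moreover have "M \<inter> ball x \<delta> \<subseteq> \<Union>\<F>"
  proof
    fix z assume z: "z \<in> M \<inter> ball x \<delta>"
    then have "z \<notin> Delta \<sigma>s" using empty by blast
    moreover have "\<And>l. z $ \<sigma>s l = z $ l"
      using locally_symmetric_C2_submanifold_orbit_invariant[OF assms(1,3-5)] z by blast
    ultimately obtain i j where "z $ i = z $ j" "y $ i \<noteq> y $ j"
      by (rule Delta_coarsening[OF \<open>y \<in> Delta \<sigma>s\<close>])
    then show "z \<in> \<Union>\<F>" by (auto simp: \<F>_def equal_coords_def)
  qed
  ultimately have "\<exists>F\<in>\<F>. \<exists>x'\<in>M. \<exists>r>0. M \<inter> ball x' r \<subseteq> F"
    using \<open>x \<in> M\<close> \<open>\<delta> > 0\<close> by (intro finite_closed_cover_contains_relative_ball)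
  then obtain F x' r where "F \<in> \<F>" "x' \<in> M" "r > 0" "M \<inter> ball x' r \<subseteq> F"
    by blast
  moreover obtain i j where "F = equal_coords {(i, j)}" "y $ i \<noteq> y $ j"
    using \<open>F \<in> \<F>\<close> by (auto simp: \<F>_def)
  ultimately have "M \<subseteq> equal_coords {(i, j)}"
    using locally_symmetric_C2_submanifold_subset_equal_coords[OF assms(1)] by blast
  then show False using assms(3) \<open>y $ i \<noteq> y $ j\<close> by (auto simp: equal_coords_def)
qed

end
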